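(* Under the setting below, let $X$ be such that $k^*(X)=\arg\max_{k\in K}p_\theta(k\mid X)$ is unique. Then for every translation $\mathbf g\in\mathbb{Z}^3$, $k^*(T_{\mathbf g}X)$ is unique and equals $\pi_{\mathbf g}(k^*(X))$, and $$\mathrm{APT}(T_{\mathbf g}X)=T_{\mathbf g'}\,\mathrm{APT}(X),\qquad \mathbf g'=\Big\lfloor \tfrac{k^*(X)+\mathbf g}{\mathbf s}\Big\rfloor$$ (floor and division componentwise), where $T_{\mathbf g'}$ is a circular translation of the coarse grid.
   Context: Volumes $X:\mathbb{Z}_D\times\mathbb{Z}_H\times\mathbb{Z}_W\to\mathbb{R}^C$ with periodic boundary conditions; patch size $\mathbf s=(s_D,s_H,s_W)$ with $s_D\mid D$, $s_H\mid H$, $s_W\mid W$. Translation: $(T_{\mathbf g}Y)(x)=Y(x-\mathbf g)$, indices modulo the grid size. Phase index set $K=\{0,\dots,s_D-1\}\times\{0,\dots,s_H-1\}\times\{0,\dots,s_W-1\}$. Polyphase decomposition: for $k=(p,q,r)\in K$, $\Psi(X)_k(i,j,l)=X(i s_D+p,\;j s_H+q,\;l s_W+r)$ on the coarse grid $V=\mathbb{Z}_{D/s_D}\times\mathbb{Z}_{H/s_H}\times\mathbb{Z}_{W/s_W}$. $\tilde f_\theta$ maps volumes on $V$ to real-valued fields on $V$ and is translation-equivariant: $\tilde f_\theta(T_{\mathbf c}Y)=T_{\mathbf c}\tilde f_\theta(Y)$. Score $f_\theta(Y)=\frac1{|V|}\sum_{v\in V}\tilde f_\theta(Y)[v]$;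 selection probabilities $p_\theta(k\mid X)=\exp[f_\theta(\Psi(X)_k)]/\sum_{k'\in K}\exp[f_\theta(\Psi(X)_{k'})]$. Permutation $\pi_{\mathbf g}(k)=(k+\mathbf g)\bmod\mathbf s$ componentwise. Adaptive Phase Tokenization (deterministic/inference mode): $\mathrm{APT}(X)=\Psi(X)_{k^*(X)}$ with $k^*(X)=\arg\max_{k\in K}p_\theta(k\mid X)$. *)

theory Defs
  imports "HOL-Analysis.Analysis"
begin

text \<open>Points of the (fine or coarse) grid are represented by integer triples; a volume
on the periodic grid Z_D x Z_H x Z_W is represented by a function on Z^3 that is periodic
with periods (D,H,W).  Equality of such periodic functions is equality of volumes.\<close>

type_synonym idx3 = "int \<times> int \<times> int"
type_synonym 'a vol = "idx3 \<Rightarrow> 'a"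

definition periodic3 :: "idx3 \<Rightarrow> 'a vol \<Rightarrow> bool" where
  "periodic3 N Y \<longleftrightarrow> (case N of (a, b, c) \<Rightarrow>
     (\<forall>i j l. Y (i + a, j, l) = Y (i, j, l) \<and> Y (i, j + b, l) = Y (i, j, l)
             \<and> Y (i, j, l + c) = Y (i, j, l)))"

definition shift3 :: "idx3 \<Rightarrow> 'a vol \<Rightarrow> 'a vol" where
  "shift3 g Y = (\<lambda>(i, j, l). case g of (a, b, c) \<Rightarrow> Y (i - a, j - b, l - c))"

text \<open>Set of representatives {0..<a} x {0..<b} x {0..<c} (used for K and V).\<close>
definition grid3 :: "idx3 \<Rightarrow> idx3 set" where
  "grid3 N = (case N of (a, b, c) \<Rightarrow> {0..<a} \<times> {0..<b} \<times> {0..<c})"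

definition coarse3 :: "idx3 \<Rightarrow> idx3 \<Rightarrow> idx3" where
  "coarse3 N s = (case N of (a, b, c) \<Rightarrow> case s of (p, q, r) \<Rightarrow> (a div p, b div q, c div r))"

definition polyphase :: "idx3 \<Rightarrow> 'a vol \<Rightarrow> idx3 \<Rightarrow> 'a vol" where
  "polyphase s X k = (\<lambda>(i, j, l). case s of (sD, sH, sW) \<Rightarrow> case k of (p, q, r) \<Rightarrow>
      X (i * sD + p, j * sH + q, l * sW + r))"

definition score :: "('a vol \<Rightarrow> real vol) \<Rightarrow> idx3 \<Rightarrow> 'a vol \<Rightarrow> real" where
  "score ft V Y = (\<Sum>v\<in>grid3 V. ft Y v) / real (card (grid3 V))"

definition selprob :: "('a vol \<Rightarrow> real vol) \<Rightarrow> idx3 \<Rightarrow> idx3 \<Rightarrow> 'a vol \<Rightarrow> idx3 \<Rightarrow> real" where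
  "selprob ft N s X k =
     exp (score ft (coarse3 N s) (polyphase s X k)) /
     (\<Sum>k'\<in>grid3 s. exp (score ft (coarse3 N s) (polyphase s X k')))"

definition is_argmax_phase :: "('a vol \<Rightarrow> real vol) \<Rightarrow> idx3 \<Rightarrow> idx3 \<Rightarrow> 'a vol \<Rightarrow> idx3 \<Rightarrow> bool" where
  "is_argmax_phase ft N s X k \<longleftrightarrow>
     k \<in> grid3 s \<and> (\<forall>k'\<in>grid3 s. selprob ft N s X k' \<le> selprob ft N s X k)"

definition kstar :: "('a vol \<Rightarrow> real vol) \<Rightarrow> idx3 \<Rightarrow> idx3 \<Rightarrow> 'a vol \<Rightarrow> idx3" where
  "kstar ft N s X = (THE k. is_argmax_phase ft N s X k)"

definition APT :: "('a vol \<Rightarrow> real vol) \<Rightarrow> idx3 \<Rightarrow> idx3 \<Rightarrow> 'a vol \<Rightarrow> 'a vol" where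
  "APT ft N s X = polyphase s X (kstar ft N s X)"

definition perm3 :: "idx3 \<Rightarrow> idx3 \<Rightarrow> idx3 \<Rightarrow> idx3" where
  "perm3 s g k = (case s of (sD, sH, sW) \<Rightarrow> case g of (a, b, c) \<Rightarrow> case k of (p, q, r) \<Rightarrow>
     ((p + a) mod sD, (q + b) mod sH, (r + c) mod sW))"

text \<open>floor((k + g) / s) componentwise (int div is floor division).\<close>
definition floordiv3 :: "idx3 \<Rightarrow> idx3 \<Rightarrow> idx3 \<Rightarrow> idx3" where
  "floordiv3 s g k = (case s of (sD, sH, sW) \<Rightarrow> case g of (a, b, c) \<Rightarrow> case k of (p, q, r) \<Rightarrow>
     ((p + a) div sD, (q + b) div sH, (r + c) div sW))"

end

theory Submission
  imports Defs "HOL-Library.Periodic_Fun"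
begin

(* Translating X by g permutes its polyphase components: the component of phase k reappears
   as the component of phase pi_g(k) of T_g X, translated on the coarse grid by the carry
   floor((k + g) / s).  The score averages a translation-equivariant field over the periodic
   coarse grid, so it is translation invariant; hence the scores of T_g X are those of X
   permuted by pi_g, the unique maximiser moves from k_star to pi_g(k_star), and the selected
   component is the translated one. *)

abbreviation phase_score :: "('a vol \<Rightarrow> real vol) \<Rightarrow> idx3 \<Rightarrow> idx3 \<Rightarrow> 'a vol \<Rightarrow> idx3 \<Rightarrow> real" where
  "phase_score ft N s X k \<equiv> score ft (coarse3 N s) (polyphase s X k)"

lemma bij_betw_add_mod:
  fixes n c :: int
  assumes "n > 0"
  shows "bij_betw (\<lambda>i. (i + c) mod n) {0..<n} {0..<n}"
  by (intro bij_betwI[of _ _ _ "\<lambda>i. (i - c) mod n"]) (use assms in \<open>auto simp: mod_simps\<close>)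

lemma bij_betw_perm3:
  assumes "a > 0" "b > 0" "c > 0"
  shows "bij_betw (perm3 (a, b, c) g) (grid3 (a, b, c)) (grid3 (a, b, c))"
proof -
  obtain x y z where g: "g = (x, y, z)" by (cases g)
  have "perm3 (a, b, c) g
      = map_prod (\<lambda>p. (p + x) mod a) (map_prod (\<lambda>q. (q + y) mod b) (\<lambda>r. (r + z) mod c))"
    by (auto simp: perm3_def g)
  then show ?thesis
    unfolding grid3_def prod.case
    by (simp add: assms bij_betw_map_prod bij_betw_add_mod)
qed

lemma periodic3_mod:
  assumes "a > 0" "b > 0" "c > 0" "periodic3 (a, b, c) F"
  shows "F (i, j, l) = F (i mod a, j mod b, l mod c)"
proof -
  have per: "periodic_fun_simple (\<lambda>x. F (x, j', l')) a"
    "periodic_fun_simple (\<lambda>y. F (i', y, l')) b"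
    "periodic_fun_simple (\<lambda>z. F (i', j', z)) c" for i' j' l'
    using assms(4) by (simp_all add: periodic_fun_simple_def periodic3_def)
  have mod_period: "f x = f (x mod n)" if "periodic_fun_simple f n" for f :: "int \<Rightarrow> 'b" and x n
  proof -
    interpret periodic_fun_simple f n by (rule that)
    show ?thesis using plus_of_int[of "x mod n" "x div n"] by (simp add: mod_div_mult_eq)
  qed
  show ?thesis
    using mod_period[OF per(1)] mod_period[OF per(2)] mod_period[OF per(3)] by metis
qed

text \<open>On a periodic field a translation only permutes the representatives of the grid.\<close>

lemma sum_grid3_shift3:
  fixes F :: "'b::comm_monoid_add vol"
  assumes "a > 0" "b > 0" "c > 0" "periodic3 (a, b, c) F"
  shows "(\<Sum>v\<in>grid3 (a, b, c). shift3 t F v) = (\<Sum>v\<in>grid3 (a, b, c). F v)"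
proof -
  have "shift3 t F v = F (perm3 (a, b, c) (- t) v)" for v
    using periodic3_mod[OF assms] by (auto simp: shift3_def perm3_def split: prod.splits)
  then show ?thesis
    using sum.reindex_bij_betw[OF bij_betw_perm3[OF assms(1-3)], of F "- t"] by simp
qed

lemma score_shift3:
  assumes "a > 0" "b > 0" "c > 0"
    and "periodic3 (a, b, c) (ft Y)" "ft (shift3 t Y) = shift3 t (ft Y)"
  shows "score ft (a, b, c) (shift3 t Y) = score ft (a, b, c) Y"
  using sum_grid3_shift3[OF assms(1-4)] by (simp add: score_def assms(5))

lemma polyphase_periodic:
  assumes "sD dvd D" "sH dvd H" "sW dvd W" "periodic3 (D, H, W) X"
  shows "periodic3 (coarse3 (D, H, W) (sD, sH, sW)) (polyphase (sD, sH, sW) X k)"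
proof -
  obtain p q r where k: "k = (p, q, r)" by (cases k)
  have coarse_step: "(i + N div s) * s + x = (i * s + x) + N" if "s dvd N" for i s x N :: int
    using that by (simp add: algebra_simps)
  show ?thesis
    using assms(4)
    by (simp add: periodic3_def coarse3_def polyphase_def k coarse_step[OF assms(1)]
        coarse_step[OF assms(2)] coarse_step[OF assms(3)])
qed

lemma polyphase_shift3_perm3:
  "polyphase s (shift3 g X) (perm3 s g k) = shift3 (floordiv3 s g k) (polyphase s X k)"
proof -
  have carry: "i * n + (x + t) mod n - t = (i - (x + t) div n) * n + x" for i n x t :: int
    by (simp add: minus_div_mult_eq_mod[symmetric] algebra_simps)
  show ?thesis
    by (auto simp: polyphase_def shift3_def perm3_def floordiv3_def carry split: prod.splits)
qed

lemma is_argmax_phase_iff_phase_score: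
  "is_argmax_phase ft N s X k \<longleftrightarrow>
     k \<in> grid3 s \<and> (\<forall>k'\<in>grid3 s. phase_score ft N s X k' \<le> phase_score ft N s X k)"
proof (cases "k \<in> grid3 s")
  case True
  have "finite (grid3 s)" by (simp add: grid3_def split: prod.splits)
  then have "(\<Sum>k'\<in>grid3 s. exp (phase_score ft N s X k')) > 0"
    using True by (intro sum_pos2) auto
  then show ?thesis
    by (simp add: is_argmax_phase_def selprob_def divide_le_cancel)
qed (simp add: is_argmax_phase_def)

lemma phase_score_shift3:
  assumes pos: "D > 0" "H > 0" "W > 0" "sD > 0" "sH > 0" "sW > 0"
    and dvd: "sD dvd D" "sH dvd H" "sW dvd W"
    and X_per: "periodic3 (D, H, W) X"
    and ft_field: "\<And>Y. periodic3 (coarse3 (D, H, W) (sD, sH, sW)) Y \<Longrightarrow>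
                     periodic3 (coarse3 (D, H, W) (sD, sH, sW)) (ft Y)"
    and ft_equiv: "\<And>Y c. periodic3 (coarse3 (D, H, W) (sD, sH, sW)) Y \<Longrightarrow>
                     ft (shift3 c Y) = shift3 c (ft Y)"
  shows "phase_score ft (D, H, W) (sD, sH, sW) (shift3 g X) (perm3 (sD, sH, sW) g k)
       = phase_score ft (D, H, W) (sD, sH, sW) X k"
proof -
  let ?Y = "polyphase (sD, sH, sW) X k"
  have Y_per: "periodic3 (coarse3 (D, H, W) (sD, sH, sW)) ?Y"
    by (rule polyphase_periodic[OF dvd X_per])
  have coarse_pos: "D div sD > 0" "H div sH > 0" "W div sW > 0"
    using pos dvd by (auto simp: pos_imp_zdiv_pos_iff zdvd_imp_le)
  show ?thesis
    unfolding polyphase_shift3_perm3 coarse3_def prod.case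
    by (rule score_shift3[OF coarse_pos])
      (use ft_field[OF Y_per] ft_equiv[OF Y_per] in \<open>simp_all add: coarse3_def\<close>)
qed

lemma is_argmax_phase_shift3:
  assumes pos: "D > 0" "H > 0" "W > 0" "sD > 0" "sH > 0" "sW > 0"
    and "sD dvd D" "sH dvd H" "sW dvd W"
    and "periodic3 (D, H, W) X"
    and "\<And>Y. periodic3 (coarse3 (D, H, W) (sD, sH, sW)) Y \<Longrightarrow>
                     periodic3 (coarse3 (D, H, W) (sD, sH, sW)) (ft Y)"
    and "\<And>Y c. periodic3 (coarse3 (D, H, W) (sD, sH, sW)) Y \<Longrightarrow>
                     ft (shift3 c Y) = shift3 c (ft Y)"
    and k: "k \<in> grid3 (sD, sH, sW)"
  shows "is_argmax_phase ft (D, H, W) (sD, sH, sW) (shift3 g X) (perm3 (sD, sH, sW) g k)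
     \<longleftrightarrow> is_argmax_phase ft (D, H, W) (sD, sH, sW) X k"
proof -
  have bij: "bij_betw (perm3 (sD, sH, sW) g) (grid3 (sD, sH, sW)) (grid3 (sD, sH, sW))"
    by (rule bij_betw_perm3[OF pos(4-6)])
  have reindex: "(\<forall>k'\<in>grid3 (sD, sH, sW). P k')
      \<longleftrightarrow> (\<forall>k'\<in>grid3 (sD, sH, sW). P (perm3 (sD, sH, sW) g k'))" for P
    using Ball_image_comp[of "perm3 (sD, sH, sW) g" "grid3 (sD, sH, sW)" P]
      bij_betw_imp_surj_on[OF bij]
    by (simp add: comp_def)
  let ?score = "phase_score ft (D, H, W) (sD, sH, sW)"
  have "(\<forall>k'\<in>grid3 (sD, sH, sW).
          ?score (shift3 g X) k' \<le> ?score (shift3 g X) (perm3 (sD, sH, sW) g k))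
      \<longleftrightarrow> (\<forall>k'\<in>grid3 (sD, sH, sW). ?score X k' \<le> ?score X k)"
    by (subst reindex) (simp add: phase_score_shift3[OF assms(1-12)])
  then show ?thesis
    using k bij_betw_apply[OF bij k] by (simp add: is_argmax_phase_iff_phase_score)
qed

theorem mainTheorem3:
  fixes D H W sD sH sW :: int
    and ft :: "(real ^ 'c) vol \<Rightarrow> real vol"
    and X :: "(real ^ 'c) vol"
    and g :: idx3
  assumes pos: "D > 0" "H > 0" "W > 0" "sD > 0" "sH > 0" "sW > 0"
    and dvd: "sD dvd D" "sH dvd H" "sW dvd W"
    and X_per: "periodic3 (D, H, W) X"
    and ft_field: "\<And>Y. periodic3 (coarse3 (D, H, W) (sD, sH, sW)) Y \<Longrightarrow>
                     periodic3 (coarse3 (D, H, W) (sD, sH, sW)) (ft Y)"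
    and ft_equiv: "\<And>Y c. periodic3 (coarse3 (D, H, W) (sD, sH, sW)) Y \<Longrightarrow>
                     ft (shift3 c Y) = shift3 c (ft Y)"
    and uniq: "\<exists>!k. is_argmax_phase ft (D, H, W) (sD, sH, sW) X k"
  shows "(\<exists>!k. is_argmax_phase ft (D, H, W) (sD, sH, sW) (shift3 g X) k)
       \<and> kstar ft (D, H, W) (sD, sH, sW) (shift3 g X)
           = perm3 (sD, sH, sW) g (kstar ft (D, H, W) (sD, sH, sW) X)
       \<and> APT ft (D, H, W) (sD, sH, sW) (shift3 g X)
           = shift3 (floordiv3 (sD, sH, sW) g (kstar ft (D, H, W) (sD, sH, sW) X))
               (APT ft (D, H, W) (sD, sH, sW) X)"
proof -
  let ?argmax = "is_argmax_phase ft (D, H, W) (sD, sH, sW)"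
  let ?\<pi> = "perm3 (sD, sH, sW) g"
  define k0 where "k0 = kstar ft (D, H, W) (sD, sH, sW) X"
  have k0: "?argmax X k0"
    unfolding k0_def kstar_def using uniq by (rule theI')
  have k0_grid: "k0 \<in> grid3 (sD, sH, sW)"
    using k0 by (simp add: is_argmax_phase_def)
  have shift_argmax: "?argmax (shift3 g X) (?\<pi> k) \<longleftrightarrow> ?argmax X k"
    if "k \<in> grid3 (sD, sH, sW)" for k
    by (rule is_argmax_phase_shift3[OF assms(1-12) that])
  have "?argmax (shift3 g X) k \<longleftrightarrow> k = ?\<pi> k0" for k
  proof
    assume k: "?argmax (shift3 g X) k"
    then obtain k' where "k' \<in> grid3 (sD, sH, sW)" "k = ?\<pi> k'"
      using bij_betw_perm3[OF pos(4-6)] unfolding is_argmax_phase_def bij_betw_def by blast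
    then show "k = ?\<pi> k0" using k shift_argmax uniq k0 by blast
  next
    assume "k = ?\<pi> k0"
    then show "?argmax (shift3 g X) k" using shift_argmax[OF k0_grid] k0 by simp
  qed
  then have "kstar ft (D, H, W) (sD, sH, sW) (shift3 g X) = ?\<pi> k0"
    and "\<exists>!k. ?argmax (shift3 g X) k"
    by (auto simp: kstar_def)
  then show ?thesis
    by (simp add: k0_def[symmetric] APT_def polyphase_shift3_perm3)
qed

end
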